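(* Let $H$ be a nonempty bounded subset of $\mathbb R^n$ and let $h\colon\mathbb R^n\to\mathbb R^n$ be continuously differentiable with $\sup_{x\in H}\mu(h'(x))<0$. Then the autonomous equation $x'=h(x)$ has the conditional Lipschitz shadowing property in $H$.
   Context: $|\cdot|$ is a fixed norm on $\mathbb R^n$ and also denotes the induced matrix norm. The logarithmic norm of $A\in\mathbb R^{n\times n}$ is $\mu(A):=\lim_{h\to0^+}\frac{|I+hA|-1}{h}$; $h'(x)$ is the Jacobian matrix of $h$ at $x$. For $\tau\in(0,\infty]$, a pseudosolution of $x'=h(x)$ on $[0,\tau)$ is a $C^1$ map $y\colon[0,\tau)\to\mathbb R^n$ with $\sigma_y:=\sup_{0\le t<\tau}|y'(t)-h(y(t))|<\infty$. The equation has the conditional Lipschitz shadowing property in $H\neq\emptyset$ if there exist $\varepsilon_0,\kappa>0$ such that whenever $0<\varepsilon\le\varepsilon_0$ and $y$ is a pseudosolution on $[0,\tau)$ ($\tau\in(0,\infty]$) with $\sigma_y\le\varepsilon$ and $y(t)\in H$ for all $t\in[0,\tau)$, there is a solution $x$ defined on $[0,\tau)$ with $\sup_{0\le t<\tau}|x(t)-y(t)|\le\kappa\varepsilon$. *)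

theory Defs
  imports "HOL-Analysis.Analysis"
begin

definition is_norm :: "(real^'n \<Rightarrow> real) \<Rightarrow> bool" where
  "is_norm N \<longleftrightarrow> (\<forall>x. 0 \<le> N x) \<and> (\<forall>x. N x = 0 \<longleftrightarrow> x = 0)
     \<and> (\<forall>c x. N (c *\<^sub>R x) = \<bar>c\<bar> * N x) \<and> (\<forall>x y. N (x + y) \<le> N x + N y)"

definition mat_norm :: "(real^'n \<Rightarrow> real) \<Rightarrow> real^'n^'n \<Rightarrow> real" where
  "mat_norm N A = (SUP x\<in>{x. N x = 1}. N (A *v x))"

definition log_norm :: "(real^'n \<Rightarrow> real) \<Rightarrow> real^'n^'n \<Rightarrow> real" where
  "log_norm N A = Lim (at_right 0) (\<lambda>s. (mat_norm N (mat 1 + s *\<^sub>R A) - 1) / s)"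

definition jacobian :: "(real^'n \<Rightarrow> real^'n) \<Rightarrow> real^'n \<Rightarrow> real^'n^'n" where
  "jacobian h x = matrix (frechet_derivative h (at x))"

definition dom_int :: "ereal \<Rightarrow> real set" where
  "dom_int \<tau> = {t. 0 \<le> t \<and> ereal t < \<tau>}"

definition C1_on_with :: "ereal \<Rightarrow> (real \<Rightarrow> real^'n) \<Rightarrow> (real \<Rightarrow> real^'n) \<Rightarrow> bool" where
  "C1_on_with \<tau> y y' \<longleftrightarrow> continuous_on (dom_int \<tau>) y' \<and>
     (\<forall>t\<in>dom_int \<tau>. (y has_vector_derivative y' t) (at t within dom_int \<tau>))"

definition pseudosolution :: "(real^'n \<Rightarrow> real) \<Rightarrow> (real^'n \<Rightarrow> real^'n) \<Rightarrow> ereal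
    \<Rightarrow> (real \<Rightarrow> real^'n) \<Rightarrow> (real \<Rightarrow> real^'n) \<Rightarrow> bool" where
  "pseudosolution N h \<tau> y y' \<longleftrightarrow> C1_on_with \<tau> y y' \<and>
     bdd_above ((\<lambda>t. N (y' t - h (y t))) ` dom_int \<tau>)"

definition sigma :: "(real^'n \<Rightarrow> real) \<Rightarrow> (real^'n \<Rightarrow> real^'n) \<Rightarrow> ereal
    \<Rightarrow> (real \<Rightarrow> real^'n) \<Rightarrow> (real \<Rightarrow> real^'n) \<Rightarrow> real" where
  "sigma N h \<tau> y y' = (SUP t\<in>dom_int \<tau>. N (y' t - h (y t)))"

definition is_solution :: "(real^'n \<Rightarrow> real^'n) \<Rightarrow> ereal \<Rightarrow> (real \<Rightarrow> real^'n) \<Rightarrow> bool" where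
  "is_solution h \<tau> x \<longleftrightarrow>
     (\<forall>t\<in>dom_int \<tau>. (x has_vector_derivative h (x t)) (at t within dom_int \<tau>))"

definition cond_lipschitz_shadowing ::
    "(real^'n \<Rightarrow> real) \<Rightarrow> (real^'n \<Rightarrow> real^'n) \<Rightarrow> (real^'n) set \<Rightarrow> bool" where
  "cond_lipschitz_shadowing N h H \<longleftrightarrow> (\<exists>\<epsilon>0 > 0. \<exists>\<kappa> > 0.
     \<forall>\<epsilon> \<tau> y y'. 0 < \<epsilon> \<and> \<epsilon> \<le> \<epsilon>0 \<and> 0 < \<tau> \<and> pseudosolution N h \<tau> y y'
        \<and> sigma N h \<tau> y y' \<le> \<epsilon> \<and> (\<forall>t\<in>dom_int \<tau>. y t \<in> H)
      \<longrightarrow> (\<exists>x. is_solution h \<tau> x \<and>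
             (SUP t\<in>dom_int \<tau>. N (x t - y t)) \<le> \<kappa> * \<epsilon>
             \<and> bdd_above ((\<lambda>t. N (x t - y t)) ` dom_int \<tau>)))"

end

theory Submission
  imports Defs
begin

text \<open>Write \<open>\<mu> < -2a\<close> for the bound on the logarithmic norm. Uniformly near \<open>H\<close> and for small
  \<open>s > 0\<close> one has \<open>|I + s h'(w)| \<le> 1 - a s\<close>, so by the mean value inequality the Euler step
  \<open>p \<mapsto> p + s h(p)\<close> contracts by the factor \<open>1 - a s\<close> along short segments near \<open>H\<close>.
  Given a pseudosolution \<open>y\<close> in \<open>H\<close> with defect \<open>\<epsilon>\<close>, let \<open>x\<close> solve \<open>x' = h(x)\<close>, \<open>x(0) = y(0)\<close>
  (for a globally Lipschitz field that agrees with \<open>h\<close> near \<open>H\<close>). Comparing one Euler step of \<open>x\<close>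
  and of \<open>y\<close> shows that \<open>|x - y|\<close> cannot increase while \<open>\<epsilon>/a < |x - y| < 2\<epsilon>/a\<close>, hence
  \<open>|x - y| \<le> \<epsilon>/a\<close> for all times; in particular \<open>x\<close> never leaves the region where the field is \<open>h\<close>.\<close>

section \<open>Monotonicity from one-sided local information\<close>

lemma locally_right_nonincreasing_imp_le:
  fixes f :: "real \<Rightarrow> real"
  assumes "a \<le> b" and cont: "continuous_on {a..b} f"
    and loc: "\<And>r. a < r \<Longrightarrow> r < b \<Longrightarrow> \<forall>\<^sub>F u in at_right r. f u \<le> f r"
  shows "f b \<le> f a"
proof -
  have from_inner_point: "f b \<le> f a'" if "a < a'" "a' \<le> b" for a'
  proof -
    define S where "S = {a'..b} \<inter> f -` {..f a'}"
    have "closed S"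
      unfolding S_def using that
      by (intro continuous_closed_preimage continuous_on_subset[OF cont]) auto
    moreover have "a' \<in> S" "bdd_above S"
      using that unfolding S_def by (auto intro: bdd_aboveI2[of _ _ b])
    ultimately have mS: "Sup S \<in> S" using closed_contains_Sup by blast
    have "Sup S = b"
    proof (rule ccontr)
      assume "Sup S \<noteq> b"
      with mS have m: "a < Sup S" "Sup S < b" using that unfolding S_def by auto
      then obtain b' where b': "Sup S < b'" "\<And>u. Sup S < u \<Longrightarrow> u < b' \<Longrightarrow> f u \<le> f (Sup S)"
        using loc[OF m] by (auto simp: eventually_at_right_field)
      define u where "u = (Sup S + min b b') / 2"
      have u: "Sup S < u" "u < b" "f u \<le> f (Sup S)" using m b' unfolding u_def by auto
      then have "u \<in> S" using mS unfolding S_def by auto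
      with u(1) show False using cSup_upper[OF _ \<open>bdd_above S\<close>] by fastforce
    qed
    with mS show ?thesis unfolding S_def by auto
  qed
  show ?thesis
  proof (cases "a = b")
    case False
    with \<open>a \<le> b\<close> have "a < b" by simp
    have "(f \<longlongrightarrow> f a) (at_right a)"
      using cont \<open>a < b\<close> by (simp add: continuous_on_Icc_at_rightD)
    moreover have "\<forall>\<^sub>F a' in at_right a. f b \<le> f a'"
      using \<open>a < b\<close> by (auto simp: eventually_at_right_field intro!: exI[of _ b] from_inner_point)
    ultimately show ?thesis by (rule tendsto_lowerbound) simp
  qed simp
qed

text \<open>Crossing \<open>c\<close> would require a stretch with \<open>c < f < d\<close> right after the last time
  \<open>f \<le> c\<close>, and on it \<open>f\<close> cannot increase.\<close>
lemma barrier_le: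
  fixes f :: "real \<Rightarrow> real"
  assumes "a \<le> b" and cont: "continuous_on {a..b} f" and "f a \<le> c" "c < d"
    and loc: "\<And>r. a < r \<Longrightarrow> r < b \<Longrightarrow> c < f r \<Longrightarrow> f r < d \<Longrightarrow> \<forall>\<^sub>F u in at_right r. f u \<le> f r"
  shows "f b \<le> c"
proof (rule ccontr)
  assume "\<not> f b \<le> c"
  define S where "S = {a..b} \<inter> f -` {..c}"
  have "closed S"
    unfolding S_def by (intro continuous_closed_preimage cont) auto
  moreover have "a \<in> S" "bdd_above S"
    using assms unfolding S_def by (auto intro: bdd_aboveI2[of _ _ b])
  ultimately have "Sup S \<in> S" using closed_contains_Sup by blast
  define t0 where "t0 = Sup S"
  have t0: "a \<le> t0" "t0 < b" "f t0 \<le> c"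
    using \<open>Sup S \<in> S\<close> \<open>\<not> f b \<le> c\<close> unfolding t0_def S_def by (auto simp: le_less)
  have above: "c < f u" if "t0 < u" "u \<le> b" for u
    using cSup_upper[OF _ \<open>bdd_above S\<close>, of u] that t0 unfolding t0_def S_def by force
  have "(f \<longlongrightarrow> f t0) (at_right t0)"
    using t0 by (intro continuous_on_Icc_at_rightD[OF continuous_on_subset[OF cont]]) auto
  then have "\<forall>\<^sub>F u in at_right t0. f u < d"
    using t0 \<open>c < d\<close> by (elim order_tendstoD(2)) auto
  then obtain b' where b': "t0 < b'" "\<And>u. t0 < u \<Longrightarrow> u < b' \<Longrightarrow> f u < d"
    by (auto simp: eventually_at_right_field)
  define t2 where "t2 = (t0 + min b b') / 2"
  have t2: "t0 < t2" "t2 < b'" "t2 < b" using t0 b' unfolding t2_def by auto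
  have "f t2 \<le> f t0"
  proof (rule locally_right_nonincreasing_imp_le[where f = f])
    show "continuous_on {t0..t2} f" using t0 t2 by (intro continuous_on_subset[OF cont]) auto
    show "\<forall>\<^sub>F u in at_right r. f u \<le> f r" if "t0 < r" "r < t2" for r
      using that t0 t2 by (intro loc above b') auto
  qed (use t2 in simp)
  with t0(3) above[of t2] t2 show False by simp
qed

section \<open>Global solutions of Lipschitz equations\<close>

primrec picard :: "('a::banach \<Rightarrow> 'a) \<Rightarrow> 'a \<Rightarrow> nat \<Rightarrow> real \<Rightarrow> 'a" where
  "picard f x0 0 = (\<lambda>t. x0)"
| "picard f x0 (Suc k) = (\<lambda>t. x0 + integral {0..t} (\<lambda>s. f (picard f x0 k s)))"

lemma continuous_on_picard:
  assumes "continuous_on UNIV f"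
  shows "continuous_on {0..T} (picard f x0 k)"
proof (induction k)
  case (Suc k)
  have "continuous_on {0..T} (\<lambda>s. f (picard f x0 k s))"
    using continuous_on_compose2[OF assms Suc] by simp
  from indefinite_integral_continuous_1[OF integrable_continuous_real[OF this]] show ?case
    by (simp add: continuous_on_add)
qed simp

lemma has_integral_power_0: "0 \<le> t \<Longrightarrow> ((\<lambda>s. s ^ k) has_integral t ^ Suc k / Suc k) {0..t}"
proof -
  assume "0 \<le> t"
  have "((\<lambda>s. s ^ Suc k / Suc k) has_real_derivative s ^ k) (at s within {0..t})" for s
    using DERIV_cdivide[OF DERIV_pow[of "Suc k" s], of "Suc k"] by (simp del: of_nat_Suc)
  with fundamental_theorem_of_calculus[OF \<open>0 \<le> t\<close>, of "\<lambda>s. s ^ Suc k / Suc k"] show ?thesis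
    by (simp add: has_real_derivative_iff_has_vector_derivative del: of_nat_Suc)
qed

lemma norm_picard_Suc_diff_le:
  fixes f :: "'a::banach \<Rightarrow> 'a"
  assumes lip: "L-lipschitz_on UNIV f" and "0 \<le> t"
  shows "norm (picard f x0 (Suc k) t - picard f x0 k t) \<le> norm (f x0) * L ^ k * t ^ Suc k / fact (Suc k)"
  using \<open>0 \<le> t\<close>
proof (induction k arbitrary: t)
  case 0
  then show ?case by (simp add: integral_const_real)
next
  case (Suc k)
  let ?X = "picard f x0" and ?c = "norm (f x0) * L ^ Suc k / fact (Suc k)"
  have cf: "continuous_on UNIV f" using lip by (rule lipschitz_on_continuous_on)
  have cont: "continuous_on {0..t} (\<lambda>s. f (?X j s))" for j
    using continuous_on_compose2[OF cf continuous_on_picard[OF cf]] by simp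
  have "?X (Suc (Suc k)) t - ?X (Suc k) t = integral {0..t} (\<lambda>s. f (?X (Suc k) s) - f (?X k s))"
    using integral_diff[OF integrable_continuous_real[OF cont[of "Suc k"]] integrable_continuous_real[OF cont[of k]]]
    by (simp only: picard.simps) simp
  also have "norm \<dots> \<le> integral {0..t} (\<lambda>s. ?c * s ^ Suc k)"
  proof (rule integral_norm_bound_integral)
    fix s assume s: "s \<in> {0..t}"
    have "norm (f (?X (Suc k) s) - f (?X k s)) \<le> L * norm (?X (Suc k) s - ?X k s)"
      using lipschitz_on_normD[OF lip] by simp
    also have "\<dots> \<le> L * (norm (f x0) * L ^ k * s ^ Suc k / fact (Suc k))"
      using Suc.IH[of s] s lipschitz_on_nonneg[OF lip] by (intro mult_left_mono) auto
    also have "\<dots> = ?c * s ^ Suc k" by simp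
    finally show "norm (f (?X (Suc k) s) - f (?X k s)) \<le> ?c * s ^ Suc k" .
  qed (intro integrable_continuous_real continuous_intros cont)+
  also have "\<dots> = norm (f x0) * L ^ Suc k * t ^ Suc (Suc k) / fact (Suc (Suc k))"
    using integral_unique[OF has_integral_mult_right[OF has_integral_power_0[OF Suc.prems, of "Suc k"]], of ?c]
    by (simp del: of_nat_Suc add: field_simps)
  finally show ?case by simp
qed

lemma picard_uniform_limit:
  fixes f :: "'a::banach \<Rightarrow> 'a"
  assumes lip: "L-lipschitz_on UNIV f"
  shows "\<exists>x. \<forall>T. uniform_limit {0..T} (picard f x0) x sequentially"
proof -
  define D where "D k t = picard f x0 (Suc k) t - picard f x0 k t" for k t
  have telescope: "picard f x0 n t = x0 + (\<Sum>i<n. D i t)" for n t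
    unfolding D_def by (subst sum_lessThan_telescope) simp
  have "uniform_limit {0..T} (picard f x0) (\<lambda>t. x0 + (\<Sum>i. D i t)) sequentially" for T
  proof -
    let ?M = "norm (f x0)"
    have L: "0 \<le> L" using lipschitz_on_nonneg[OF lip] .
    have "norm (D k t) \<le> ?M * T * (L * T) ^ k / fact k" if t: "t \<in> {0..T}" for k t
    proof -
      have "norm (D k t) \<le> ?M * L ^ k * t ^ Suc k / fact (Suc k)"
        unfolding D_def using norm_picard_Suc_diff_le[OF lip] t by auto
      also have "\<dots> \<le> ?M * L ^ k * T ^ Suc k / fact k"
        using t L by (intro frac_le mult_left_mono power_mono) (auto simp: fact_mono)
      finally show ?thesis by (simp add: power_mult_distrib ac_simps)
    qed
    moreover have "summable (\<lambda>k. ?M * T * (L * T) ^ k / fact k)"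
      using summable_mult[OF summable_exp[of "L * T"], of "?M * T"] by (simp add: field_simps)
    ultimately have "uniform_limit {0..T} (\<lambda>n t. \<Sum>i<n. D i t) (\<lambda>t. \<Sum>i. D i t) sequentially"
      by (rule Weierstrass_m_test)
    then show ?thesis
      unfolding telescope by (intro uniform_limit_add uniform_limit_const)
  qed
  then show ?thesis by blast
qed

lemma lipschitz_ode_solution_exists:
  fixes f :: "'a::banach \<Rightarrow> 'a"
  assumes lip: "L-lipschitz_on UNIV f"
  shows "\<exists>x. x 0 = x0 \<and> (\<forall>t\<ge>0. (x has_vector_derivative f (x t)) (at t within {0..}))"
proof -
  have cf: "continuous_on UNIV f" using lip by (rule lipschitz_on_continuous_on)
  obtain x where lim: "\<And>T. uniform_limit {0..T} (picard f x0) x sequentially"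
    using picard_uniform_limit[OF lip] by blast
  have fx: "continuous_on {0..T} (\<lambda>s. f (x s))" for T
    by (intro continuous_on_compose2[OF cf, of _ x] uniform_limit_theorem[OF _ lim])
      (simp_all add: continuous_on_picard[OF cf])
  have x_eq: "x t = x0 + integral {0..t} (\<lambda>s. f (x s))" if "0 \<le> t" for t
  proof -
    have "uniform_limit {0..t} (\<lambda>n s. f (picard f x0 n s)) (\<lambda>s. f (x s)) sequentially"
      using lim lipschitz_on_uniformly_continuous[OF lip]
      by (rule uniform_limit_compose_uniformly_continuous_on) auto
    moreover have "continuous_on {0..t} (\<lambda>s. f (picard f x0 n s))" for n
      using continuous_on_compose2[OF cf continuous_on_picard[OF cf]] by simp
    ultimately obtain I J where IJ: "\<And>n. ((\<lambda>s. f (picard f x0 n s)) has_integral I n) {0..t}"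
      "((\<lambda>s. f (x s)) has_integral J) {0..t}" "I \<longlonglongrightarrow> J"
      by (rule uniform_limit_integral) auto
    have "(\<lambda>n. picard f x0 (Suc n) t) \<longlonglongrightarrow> x0 + J"
      using IJ(1,3) integral_unique[OF IJ(1)] by (simp add: tendsto_add)
    moreover have "(\<lambda>n. picard f x0 (Suc n) t) \<longlonglongrightarrow> x t"
      using tendsto_uniform_limitI[OF lim[of t]] that by (intro LIMSEQ_Suc) simp
    ultimately have "x t = x0 + J" by (rule LIMSEQ_unique[rotated])
    with IJ(2) show ?thesis by (simp add: integral_unique)
  qed
  have "(x has_vector_derivative f (x t)) (at t within {0..})" if "0 \<le> t" for t
  proof -
    have "((\<lambda>u. x0 + integral {0..u} (\<lambda>s. f (x s))) has_vector_derivative f (x t)) (at t within {0..t + 1})"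
      using integral_has_vector_derivative[OF fx[of "t + 1"], of t] that
      by (auto intro!: derivative_eq_intros)
    then have "(x has_vector_derivative f (x t)) (at t within {0..t + 1})"
      by (rule has_vector_derivative_transform[rotated 2]) (use that x_eq in auto)
    moreover have "at t within {0..} = at t within {0..t + 1}"
      by (rule at_within_nhd[of _ "{..<t + 1}"]) (use that in auto)
    ultimately show ?thesis by simp
  qed
  moreover have "x 0 = x0" using x_eq[of 0] by simp
  ultimately show ?thesis by blast
qed

lemma onorm_matrix_vector_mult_le:
  fixes A :: "real^'n^'m"
  shows "onorm ((*v) A) \<le> real CARD('m) * real CARD('n) * norm A"
  by (rule onorm_le_matrix_component)
    (rule order_trans[OF component_le_norm_cart Finite_Cartesian_Product.norm_nth_le])

lemma norm_matrix_vector_mult_le: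
  fixes A :: "real^'n^'m"
  shows "norm (A *v v) \<le> real CARD('m) * real CARD('n) * norm A * norm v"
proof -
  have "norm (A *v v) \<le> onorm ((*v) A) * norm v"
    by (rule onorm) simp
  also have "\<dots> \<le> real CARD('m) * real CARD('n) * norm A * norm v"
    by (rule mult_right_mono[OF onorm_matrix_vector_mult_le norm_ge_zero])
  finally show ?thesis .
qed

lemma has_derivative_jacobian:
  fixes h :: "real^'n \<Rightarrow> real^'n"
  assumes "h differentiable (at x)"
  shows "(h has_derivative (\<lambda>v. Defs.jacobian h x *v v)) (at x)"
  using jacobian_works[of h "at x"] assms
  by (simp add: Defs.jacobian_def Cartesian_Euclidean_Space.jacobian_def)

text \<open>Compose with the nearest-point retraction onto a ball, on which the Jacobian is bounded.\<close>
lemma C1_lipschitz_extension: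
  fixes h :: "real^'n \<Rightarrow> real^'n"
  assumes diff: "\<forall>x. h differentiable (at x)" and J: "continuous_on UNIV (Defs.jacobian h)"
    and "bounded S"
  shows "\<exists>g L. L-lipschitz_on UNIV g \<and> (\<forall>w\<in>S. g w = h w)"
proof -
  obtain r where "r > 0" "\<And>x. x \<in> S \<Longrightarrow> norm x \<le> r"
    using \<open>bounded S\<close> unfolding bounded_pos by blast
  then have r: "S \<subseteq> cball 0 r" "0 \<le> r" by auto
  define B where "B = cball (0::real^'n) r"
  have "compact (Defs.jacobian h ` B)"
    unfolding B_def using continuous_on_subset[OF J] by (intro compact_continuous_image) auto
  then obtain K where "K > 0" "\<forall>A\<in>Defs.jacobian h ` B. norm A \<le> K"
    using compact_imp_bounded bounded_pos by blast
  then have K: "K > 0" "\<And>x. x \<in> B \<Longrightarrow> norm (Defs.jacobian h x) \<le> K" by auto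
  define L where "L = real CARD('n) * real CARD('n) * K"
  have "L-lipschitz_on B h"
  proof (rule bounded_derivative_imp_lipschitz)
    show "(h has_derivative (\<lambda>v. Defs.jacobian h x *v v)) (at x within B)" for x
      using diff has_derivative_jacobian by (metis has_derivative_at_withinI)
    show "onorm ((*v) (Defs.jacobian h x)) \<le> L" if "x \<in> B" for x
    proof -
      have "onorm ((*v) (Defs.jacobian h x)) \<le> real CARD('n) * real CARD('n) * norm (Defs.jacobian h x)"
        by (rule onorm_matrix_vector_mult_le)
      also have "\<dots> \<le> L" unfolding L_def using K(2)[OF that] by (intro mult_left_mono) auto
      finally show ?thesis .
    qed
    show "convex B" unfolding B_def by (rule convex_cball)
    show "0 \<le> L" unfolding L_def using K(1) by simp
  qed
  moreover have "1-lipschitz_on UNIV (closest_point B)"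
  proof (rule lipschitz_onI)
    show "dist (closest_point B x) (closest_point B y) \<le> 1 * dist x y" for x y
      using closest_point_lipschitz[of B x y] r(2) unfolding B_def by simp
  qed simp
  moreover have "closest_point B ` UNIV \<subseteq> B"
    using closest_point_in_set[of B] r(2) unfolding B_def by auto
  ultimately have "(L * 1)-lipschitz_on UNIV (\<lambda>x. h (closest_point B x))"
    by (metis lipschitz_on_compose2 lipschitz_on_subset)
  moreover have "h (closest_point B w) = h w" if "w \<in> S" for w
    using r(1) that unfolding B_def by (simp add: closest_point_self subset_iff)
  ultimately show ?thesis by blast
qed

lemma bounded_Union_balls:
  fixes H :: "'a::real_normed_vector set"
  shows "bounded H \<Longrightarrow> bounded (\<Union>p\<in>H. ball p \<delta>)"
proof -
  assume "bounded H"
  then obtain R where R: "\<And>p. p \<in> H \<Longrightarrow> norm p \<le> R" unfolding bounded_iff by blast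
  have "(\<Union>p\<in>H. ball p \<delta>) \<subseteq> cball 0 (R + \<delta>)"
  proof
    fix w assume "w \<in> (\<Union>p\<in>H. ball p \<delta>)"
    then obtain p where "p \<in> H" "norm (w - p) < \<delta>" by (auto simp: dist_norm norm_minus_commute)
    then show "w \<in> cball 0 (R + \<delta>)"
      using R[of p] norm_triangle_ineq2[of w p] by simp
  qed
  then show ?thesis using bounded_cball bounded_subset by blast
qed

lemma zero_in_dom_int: "0 < \<tau> \<Longrightarrow> 0 \<in> dom_int \<tau>"
  by (simp add: dom_int_def zero_ereal_def)

lemma Icc_subset_dom_int: "t \<in> dom_int \<tau> \<Longrightarrow> {0..t} \<subseteq> dom_int \<tau>"
  unfolding dom_int_def by (auto intro: le_less_trans[of _ "ereal t"])

lemma defect_le_sigma: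
  "pseudosolution N h \<tau> y y' \<Longrightarrow> t \<in> dom_int \<tau> \<Longrightarrow> N (y' t - h (y t)) \<le> sigma N h \<tau> y y'"
  unfolding pseudosolution_def sigma_def by (intro cSUP_upper) auto

locale cart_norm =
  fixes N :: "real^'n \<Rightarrow> real"
  assumes is_norm: "is_norm N"
begin

lemma N_nonneg: "0 \<le> N x"
  using is_norm by (simp add: is_norm_def)

lemma N_eq_0_iff: "N x = 0 \<longleftrightarrow> x = 0"
  using is_norm by (simp add: is_norm_def)

lemma N_scaleR: "N (c *\<^sub>R x) = \<bar>c\<bar> * N x"
  using is_norm by (simp add: is_norm_def)

lemma N_triangle: "N (x + y) \<le> N x + N y"
  using is_norm by (simp add: is_norm_def)

lemma N_0 [simp]: "N 0 = 0"
  using N_eq_0_iff by simp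

lemma N_pos: "x \<noteq> 0 \<Longrightarrow> 0 < N x"
  using N_nonneg N_eq_0_iff by (metis less_eq_real_def)

lemma N_minus: "N (- x) = N x"
  using N_scaleR[of "-1" x] by simp

lemma N_minus_commute: "N (x - y) = N (y - x)"
  using N_minus[of "x - y"] by simp

lemma N_triangle_diff: "N (x - y) \<le> N x + N y"
  using N_triangle[of x "- y"] by (simp add: N_minus)

lemma N_sum: "N (sum f S) \<le> (\<Sum>i\<in>S. N (f i))"
proof (induction S rule: infinite_finite_induct)
  case (insert x F)
  then show ?case using N_triangle[of "f x" "sum f F"] by simp
qed auto

lemma N_le_norm: "\<exists>c>0. \<forall>v. N v \<le> c * norm v"
proof -
  define c where "c = (\<Sum>b\<in>(Basis::(real^'n) set). N b) + 1"
  have "N v \<le> c * norm v" for v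
  proof -
    have "N v = N (\<Sum>b\<in>Basis. (v \<bullet> b) *\<^sub>R b)" by (simp add: euclidean_representation)
    also have "\<dots> \<le> (\<Sum>b\<in>Basis. N ((v \<bullet> b) *\<^sub>R b))" by (rule N_sum)
    also have "\<dots> = (\<Sum>b\<in>Basis. \<bar>v \<bullet> b\<bar> * N b)" by (simp add: N_scaleR)
    also have "\<dots> \<le> (\<Sum>b\<in>Basis. norm v * N b)"
      by (intro sum_mono mult_right_mono Basis_le_norm N_nonneg)
    also have "\<dots> \<le> c * norm v" unfolding c_def by (simp add: sum_distrib_left algebra_simps)
    finally show ?thesis .
  qed
  moreover have "c > 0" unfolding c_def using N_nonneg by (simp add: add_nonneg_pos sum_nonneg)
  ultimately show ?thesis by blast
qed

lemma continuous_on_N: "continuous_on S N"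
proof -
  obtain c where c: "c > 0" "\<And>v. N v \<le> c * norm v" using N_le_norm by blast
  have "\<bar>N x - N y\<bar> \<le> c * dist x y" for x y
    using N_triangle[of "x - y" y] N_triangle[of "y - x" x] N_minus_commute[of x y] c(2)[of "x - y"]
    by (simp add: dist_norm)
  then show ?thesis
    by (intro lipschitz_on_continuous_on[of c] lipschitz_onI) (use c in \<open>auto simp: dist_real_def\<close>)
qed

lemma norm_le_N: "\<exists>c>0. \<forall>v. norm v \<le> c * N v"
proof -
  obtain u where u: "u \<in> sphere 0 1" "\<And>w. w \<in> sphere 0 1 \<Longrightarrow> N u \<le> N w"
    using continuous_attains_inf[OF compact_sphere _ continuous_on_N, of "0::real^'n" 1] by auto
  have u0: "N u > 0" using u(1) N_pos[of u] by force
  have "norm v \<le> (1 / N u) * N v" for v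
  proof (cases "v = 0")
    case False
    have "N u \<le> N ((1 / norm v) *\<^sub>R v)" using u(2) False by simp
    also have "\<dots> = N v / norm v" by (simp add: N_scaleR)
    finally show ?thesis using u0 False by (simp add: field_simps)
  qed simp
  then show ?thesis using u0 by (intro exI[of _ "1 / N u"]) auto
qed

lemma N_matrix_vector_mult_le: "\<exists>C>0. \<forall>A v. N (A *v v) \<le> C * norm A * N v"
proof -
  obtain c1 where c1: "c1 > 0" "\<And>v. N v \<le> c1 * norm v" using N_le_norm by blast
  obtain c2 where c2: "c2 > 0" "\<And>v. norm v \<le> c2 * N v" using norm_le_N by blast
  define C where "C = c1 * real CARD('n) * real CARD('n) * c2"
  have "N (A *v v) \<le> C * norm A * N v" for A v
  proof -
    have "N (A *v v) \<le> c1 * (real CARD('n) * real CARD('n) * norm A * norm v)"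
      using c1 norm_matrix_vector_mult_le[of A v] by (meson mult_left_mono order_trans less_imp_le)
    also have "\<dots> \<le> c1 * (real CARD('n) * real CARD('n) * norm A * (c2 * N v))"
      using c1(1) c2(2)[of v] by (intro mult_left_mono) auto
    finally show ?thesis unfolding C_def by (simp add: ac_simps)
  qed
  moreover have "C > 0" unfolding C_def using c1 c2 by simp
  ultimately show ?thesis by blast
qed

lemma N_unit_exists: "\<exists>v. N v = 1"
proof -
  obtain b :: "real^'n" where "b \<in> Basis" using nonempty_Basis by blast
  then have "N b > 0" by (intro N_pos) auto
  then have "N ((1 / N b) *\<^sub>R b) = 1" by (simp add: N_scaleR)
  then show ?thesis by blast
qed

lemma bdd_above_mat_norm_image: "bdd_above ((\<lambda>v. N (A *v v)) ` {v. N v = 1})"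
proof -
  obtain C where C: "\<And>v. N (A *v v) \<le> C * norm A * N v" using N_matrix_vector_mult_le by blast
  show ?thesis
  proof (rule bdd_aboveI2[of _ _ "C * norm A"])
    fix v :: "real^'n" assume "v \<in> {v. N v = 1}"
    then show "N (A *v v) \<le> C * norm A" using C[of v] by simp
  qed
qed

lemma N_le_mat_norm: "N (A *v v) \<le> mat_norm N A * N v"
proof (cases "v = 0")
  case False
  then have p: "N v > 0" by (rule N_pos)
  have "N (A *v ((1 / N v) *\<^sub>R v)) \<le> mat_norm N A"
    unfolding mat_norm_def using p by (intro cSUP_upper bdd_above_mat_norm_image) (auto simp: N_scaleR)
  then show ?thesis using p by (simp add: matrix_vector_mult_scaleR N_scaleR field_simps)
qed simp

lemma mat_norm_le: "(\<And>v. N v = 1 \<Longrightarrow> N (A *v v) \<le> K) \<Longrightarrow> mat_norm N A \<le> K"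
  unfolding mat_norm_def using N_unit_exists by (intro cSUP_least) auto

lemma mat_norm_triangle: "mat_norm N (A + B) \<le> mat_norm N A + mat_norm N B"
proof (rule mat_norm_le)
  fix v assume "N v = 1"
  then show "N ((A + B) *v v) \<le> mat_norm N A + mat_norm N B"
    using N_triangle[of "A *v v" "B *v v"] N_le_mat_norm[of A v] N_le_mat_norm[of B v]
    by (simp add: matrix_vector_mult_add_rdistrib)
qed

lemma mat_norm_scaleR: "0 \<le> s \<Longrightarrow> mat_norm N (s *\<^sub>R A) \<le> s * mat_norm N A"
proof (rule mat_norm_le)
  fix v assume "0 \<le> s" "N v = 1"
  then show "N ((s *\<^sub>R A) *v v) \<le> s * mat_norm N A"
    using N_le_mat_norm[of A v] by (simp add: scaleR_matrix_vector_assoc[symmetric] N_scaleR mult_left_mono)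
qed

lemma mat_norm_uminus: "mat_norm N (- A) = mat_norm N A"
  unfolding mat_norm_def by (simp add: N_minus matrix_vector_mult_diff_rdistrib[of 0 A, simplified])

lemma mat_norm_1: "mat_norm N (mat 1) = 1"
proof (rule antisym)
  show "mat_norm N (mat 1) \<le> 1" by (rule mat_norm_le) simp
  obtain v where "N v = 1" using N_unit_exists by blast
  then show "1 \<le> mat_norm N (mat 1)" using N_le_mat_norm[of "mat 1" v] by simp
qed

lemma mat_norm_le_norm: "\<exists>C>0. \<forall>A. mat_norm N A \<le> C * norm A"
proof -
  obtain C where C: "C > 0" "\<And>A v. N (A *v v) \<le> C * norm A * N v"
    using N_matrix_vector_mult_le by blast
  have "mat_norm N A \<le> C * norm A" for A
  proof (rule mat_norm_le)
    fix v assume "N v = 1"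
    then show "N (A *v v) \<le> C * norm A" using C(2)[of A v] by simp
  qed
  with C(1) show ?thesis by blast
qed

subsection \<open>Mean value inequalities\<close>

lemma eventually_N_remainder_le:
  assumes "(\<gamma> has_vector_derivative v) (at r within S)" "\<forall>\<^sub>F u in at_right r. u \<in> S" "0 < e"
  shows "\<forall>\<^sub>F u in at_right r. N (\<gamma> u - \<gamma> r - (u - r) *\<^sub>R v) \<le> e * (u - r)"
proof -
  obtain c where c: "c > 0" "\<And>v. N v \<le> c * norm v" using N_le_norm by blast
  obtain \<eta> where \<eta>: "\<eta> > 0" "\<And>u. u \<in> S \<Longrightarrow> norm (u - r) < \<eta> \<Longrightarrow>
      norm (\<gamma> u - \<gamma> r - (u - r) *\<^sub>R v) \<le> e / c * norm (u - r)"
    using assms(1,3) c(1) unfolding has_vector_derivative_def has_derivative_within_alt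
    by (metis divide_pos_pos)
  have "\<forall>\<^sub>F u in at_right r. r < u \<and> u < r + \<eta>"
    using \<eta>(1) by (auto simp: eventually_at_right_field intro: exI[of _ "r + \<eta>"])
  with assms(2) show ?thesis
  proof eventually_elim
    case (elim u)
    then have "norm (\<gamma> u - \<gamma> r - (u - r) *\<^sub>R v) \<le> e / c * (u - r)"
      using \<eta>(2)[of u] by simp
    then have "c * norm (\<gamma> u - \<gamma> r - (u - r) *\<^sub>R v) \<le> e * (u - r)"
      using c(1) by (simp add: field_simps)
    then show ?case using c(2) order_trans by blast
  qed
qed

lemma N_diff_le_if_vector_derivative_bound:
  assumes "a \<le> b" and cont: "continuous_on {a..b} \<gamma>"
    and deriv: "\<And>r. a < r \<Longrightarrow> r < b \<Longrightarrow> (\<gamma> has_vector_derivative \<gamma>' r) (at r)"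
    and bound: "\<And>r. a < r \<Longrightarrow> r < b \<Longrightarrow> N (\<gamma>' r) \<le> K"
  shows "N (\<gamma> b - \<gamma> a) \<le> K * (b - a)"
proof -
  have slack: "N (\<gamma> b - \<gamma> a) \<le> (K + e) * (b - a)" if "0 < e" for e
  proof -
    define \<phi> where "\<phi> r = N (\<gamma> r - \<gamma> a) - (K + e) * (r - a)" for r
    have "continuous_on {a..b} \<phi>"
      unfolding \<phi>_def
      by (intro continuous_intros continuous_on_compose2[OF continuous_on_N, of _ _ UNIV] cont) auto
    moreover have "\<forall>\<^sub>F u in at_right r. \<phi> u \<le> \<phi> r" if r: "a < r" "r < b" for r
      using eventually_N_remainder_le[where S = UNIV, OF deriv[OF r] _ \<open>0 < e\<close>, simplified]
        eventually_at_right_less[of r]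
    proof eventually_elim
      case (elim u)
      let ?\<rho> = "\<gamma> u - \<gamma> r - (u - r) *\<^sub>R \<gamma>' r"
      have "N (\<gamma> u - \<gamma> a) \<le> N (\<gamma> r - \<gamma> a) + N ((u - r) *\<^sub>R \<gamma>' r) + N ?\<rho>"
        using N_triangle[of "\<gamma> r - \<gamma> a" "(u - r) *\<^sub>R \<gamma>' r + ?\<rho>"] N_triangle[of "(u - r) *\<^sub>R \<gamma>' r" ?\<rho>]
        by (simp add: algebra_simps)
      also have "N ((u - r) *\<^sub>R \<gamma>' r) \<le> (u - r) * K"
        using elim bound[OF r] by (simp add: N_scaleR mult_left_mono)
      finally show ?case using elim unfolding \<phi>_def by (simp add: algebra_simps)
    qed
    ultimately have "\<phi> b \<le> \<phi> a"
      by (intro locally_right_nonincreasing_imp_le[where f = \<phi>] \<open>a \<le> b\<close>)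
    then show ?thesis unfolding \<phi>_def by simp
  qed
  show ?thesis
  proof (rule field_le_epsilon)
    fix e :: real assume "0 < e"
    have "e / (b - a + 1) * (b - a) \<le> e"
      using \<open>0 < e\<close> \<open>a \<le> b\<close> by (simp add: field_simps)
    then show "N (\<gamma> b - \<gamma> a) \<le> K * (b - a) + e"
      using slack[of "e / (b - a + 1)"] \<open>0 < e\<close> \<open>a \<le> b\<close> by (simp add: algebra_simps)
  qed
qed

lemma N_diff_le_if_mat_norm_bound:
  fixes F :: "real^'n \<Rightarrow> real^'n"
  assumes deriv: "\<And>w. w \<in> closed_segment q p \<Longrightarrow> (F has_derivative (\<lambda>v. M w *v v)) (at w)"
    and bound: "\<And>w. w \<in> closed_segment q p \<Longrightarrow> mat_norm N (M w) \<le> L"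
  shows "N (F p - F q) \<le> L * N (p - q)"
proof -
  define \<sigma> where "\<sigma> r = q + r *\<^sub>R (p - q)" for r
  have seg: "\<sigma> r \<in> closed_segment q p" if "0 \<le> r" "r \<le> 1" for r
    using that unfolding \<sigma>_def closed_segment_def by (auto intro!: exI[of _ r] simp: algebra_simps)
  have deriv_\<sigma>: "((F \<circ> \<sigma>) has_vector_derivative M (\<sigma> r) *v (p - q)) (at r)"
    if "0 \<le> r" "r \<le> 1" for r
  proof -
    have "(\<sigma> has_derivative (\<lambda>t. t *\<^sub>R (p - q))) (at r)"
      unfolding \<sigma>_def by (auto intro!: derivative_eq_intros)
    from diff_chain_at[OF this deriv[OF seg[OF that]]] show ?thesis
      unfolding has_vector_derivative_def by (simp add: o_def matrix_vector_mult_scaleR)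
  qed
  have "N ((F \<circ> \<sigma>) 1 - (F \<circ> \<sigma>) 0) \<le> (L * N (p - q)) * (1 - 0)"
  proof (rule N_diff_le_if_vector_derivative_bound)
    show "continuous_on {0..1} (F \<circ> \<sigma>)"
    proof (intro continuous_at_imp_continuous_on ballI)
      fix r :: real assume "r \<in> {0..1}"
      with deriv_\<sigma>[of r] show "isCont (F \<circ> \<sigma>) r" by (auto dest: has_vector_derivative_continuous)
    qed
    show "N (M (\<sigma> r) *v (p - q)) \<le> L * N (p - q)" if "0 < r" "r < 1" for r
      using N_le_mat_norm[of "M (\<sigma> r)" "p - q"] bound[OF seg] that N_nonneg[of "p - q"]
      by (meson less_imp_le mult_right_mono order_trans)
  qed (use deriv_\<sigma> in \<open>auto simp del: o_apply\<close>)
  then show ?thesis unfolding \<sigma>_def by simp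
qed

subsection \<open>The logarithmic norm\<close>

definition log_norm_quotient :: "real^'n^'n \<Rightarrow> real \<Rightarrow> real" where
  "log_norm_quotient A s = (mat_norm N (mat 1 + s *\<^sub>R A) - 1) / s"

text \<open>Monotone because \<open>s \<mapsto> mat_norm N (mat 1 + s *\<^sub>R A)\<close> is convex and equals 1 at \<open>s = 0\<close>.\<close>
lemma log_norm_quotient_mono:
  assumes "0 < s1" "s1 \<le> s2"
  shows "log_norm_quotient A s1 \<le> log_norm_quotient A s2"
proof -
  define \<theta> where "\<theta> = s1 / s2"
  have \<theta>: "0 < \<theta>" "\<theta> \<le> 1" using assms unfolding \<theta>_def by auto
  have "mat 1 + s1 *\<^sub>R A = (1 - \<theta>) *\<^sub>R mat 1 + \<theta> *\<^sub>R (mat 1 + s2 *\<^sub>R A)"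
    using assms unfolding \<theta>_def by (simp add: algebra_simps)
  then have "mat_norm N (mat 1 + s1 *\<^sub>R A)
      \<le> mat_norm N ((1 - \<theta>) *\<^sub>R mat 1) + mat_norm N (\<theta> *\<^sub>R (mat 1 + s2 *\<^sub>R A))"
    by (simp only: mat_norm_triangle)
  also have "\<dots> \<le> (1 - \<theta>) + \<theta> * mat_norm N (mat 1 + s2 *\<^sub>R A)"
    using \<theta> mat_norm_scaleR[of "1 - \<theta>" "mat 1"] mat_norm_scaleR[of \<theta> "mat 1 + s2 *\<^sub>R A"]
    by (simp add: mat_norm_1)
  finally have "mat_norm N (mat 1 + s1 *\<^sub>R A) - 1 \<le> \<theta> * (mat_norm N (mat 1 + s2 *\<^sub>R A) - 1)"
    by (simp add: algebra_simps)
  then show ?thesis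
    using assms unfolding log_norm_quotient_def \<theta>_def by (simp add: field_simps)
qed

lemma log_norm_quotient_ge: "0 < s \<Longrightarrow> - mat_norm N A \<le> log_norm_quotient A s"
proof -
  assume s: "0 < s"
  have "1 = mat_norm N ((mat 1 + s *\<^sub>R A) + s *\<^sub>R (- A))"
    by (simp add: mat_norm_1)
  also have "\<dots> \<le> mat_norm N (mat 1 + s *\<^sub>R A) + s * mat_norm N A"
    using mat_norm_triangle mat_norm_scaleR[of s "- A"] s by (smt (verit) mat_norm_uminus)
  finally show ?thesis unfolding log_norm_quotient_def using s by (simp add: field_simps)
qed

lemma log_norm_quotient_le:
  "0 < s \<Longrightarrow> log_norm_quotient B s \<le> log_norm_quotient A s + mat_norm N (B - A)"
proof -
  assume s: "0 < s"
  have "mat_norm N (mat 1 + s *\<^sub>R B) = mat_norm N ((mat 1 + s *\<^sub>R A) + s *\<^sub>R (B - A))"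
    by (simp add: algebra_simps)
  also have "\<dots> \<le> mat_norm N (mat 1 + s *\<^sub>R A) + s * mat_norm N (B - A)"
    using mat_norm_triangle mat_norm_scaleR[of s "B - A"] s by (smt (verit))
  finally show ?thesis unfolding log_norm_quotient_def using s by (simp add: field_simps)
qed

lemma log_norm_quotient_tendsto: "(log_norm_quotient A \<longlongrightarrow> log_norm N A) (at_right 0)"
proof -
  define L where "L = Inf (log_norm_quotient A ` {0<..})"
  have bdd: "bdd_below (log_norm_quotient A ` {0<..})"
    using log_norm_quotient_ge by (auto intro!: bdd_belowI2)
  have lim: "(log_norm_quotient A \<longlongrightarrow> L) (at_right 0)"
  proof (rule order_tendstoI)
    fix a assume "a < L"
    then have "a < log_norm_quotient A s" if "0 < s" for s
      using cInf_lower[OF _ bdd, of "log_norm_quotient A s"] that unfolding L_def by force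
    then show "\<forall>\<^sub>F s in at_right 0. a < log_norm_quotient A s"
      by (auto simp: eventually_at_right_field intro: exI[of _ 1])
  next
    fix a assume "L < a"
    then obtain s0 where s0: "s0 > 0" "log_norm_quotient A s0 < a"
      unfolding L_def using cInf_lessD[of "log_norm_quotient A ` {0<..}" a] by auto
    then have "log_norm_quotient A s < a" if "0 < s" "s < s0" for s
      using log_norm_quotient_mono[of s s0 A] that by force
    then show "\<forall>\<^sub>F s in at_right 0. log_norm_quotient A s < a"
      using s0 by (auto simp: eventually_at_right_field)
  qed
  have "log_norm N A = L"
    using tendsto_Lim[OF trivial_limit_at_right_real lim]
    unfolding log_norm_def log_norm_quotient_def[abs_def] by simp
  with lim show ?thesis by simp
qed

text \<open>The bound \<open>log_norm N (J p) \<le> -b\<close> holds at each point; compactness of the closure of \<open>H\<close>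
  and uniform continuity of \<open>J\<close> make the step size uniform on a neighbourhood of \<open>H\<close>.\<close>
lemma eventually_mat_norm_le_near:
  fixes J :: "real^'n \<Rightarrow> real^'n^'n"
  assumes "bounded H" and J: "continuous_on UNIV J"
    and log_norm_J: "\<And>p. p \<in> H \<Longrightarrow> log_norm N (J p) \<le> - b" and "0 < b"
  shows "\<exists>\<delta>>0. \<forall>\<^sub>F s in at_right 0. \<forall>w\<in>(\<Union>p\<in>H. ball p \<delta>). mat_norm N (mat 1 + s *\<^sub>R J w) \<le> 1 - b / 2 * s"
proof -
  obtain R where R: "\<And>x. x \<in> H \<Longrightarrow> norm x \<le> R" using \<open>bounded H\<close> bounded_iff by blast
  define B where "B = cball (0::real^'n) (R + 1)"
  obtain C where C: "C > 0" "\<And>A. mat_norm N A \<le> C * norm A" using mat_norm_le_norm by blast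
  have "uniformly_continuous_on B J"
    unfolding B_def by (intro compact_uniformly_continuous continuous_on_subset[OF J]) auto
  then obtain d where d: "d > 0" "\<And>x x'. x \<in> B \<Longrightarrow> x' \<in> B \<Longrightarrow> dist x' x < d \<Longrightarrow> dist (J x') (J x) < b / (4 * C)"
    using \<open>0 < b\<close> C(1) unfolding uniformly_continuous_on_def by (metis divide_pos_pos mult_pos_pos zero_less_numeral)
  define \<delta> where "\<delta> = min d 1 / 2"
  have \<delta>: "\<delta> > 0" "\<delta> \<le> 1" "2 * \<delta> \<le> d" unfolding \<delta>_def using d by auto
  have "closure H \<subseteq> (\<Union>p\<in>H. ball p \<delta>)"
  proof
    fix x assume "x \<in> closure H"
    then obtain p where "p \<in> H" "dist p x < \<delta>" using closure_approachable \<delta>(1) by blast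
    then show "x \<in> (\<Union>p\<in>H. ball p \<delta>)" by auto
  qed
  then obtain F where F: "F \<subseteq> H" "finite F" "closure H \<subseteq> (\<Union>p\<in>F. ball p \<delta>)"
    using compactE_image[of "closure H" H "\<lambda>p. ball p \<delta>"] \<open>bounded H\<close> by (auto simp: compact_closure)
  have "\<forall>\<^sub>F s in at_right 0. \<forall>p\<in>F. log_norm_quotient (J p) s < - (3 / 4) * b"
  proof (intro eventually_ball_finite[OF F(2)] ballI)
    fix p assume "p \<in> F"
    then have "log_norm N (J p) < - (3 / 4) * b" using log_norm_J[of p] F(1) \<open>0 < b\<close> by auto
    then show "\<forall>\<^sub>F s in at_right 0. log_norm_quotient (J p) s < - (3 / 4) * b"
      using log_norm_quotient_tendsto order_tendstoD(2) by blast
  qed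
  moreover have "\<forall>\<^sub>F s in at_right (0::real). 0 < s"
    by (rule eventually_at_right_less)
  ultimately have "\<forall>\<^sub>F s in at_right 0. \<forall>w\<in>(\<Union>p\<in>H. ball p \<delta>). mat_norm N (mat 1 + s *\<^sub>R J w) \<le> 1 - b / 2 * s"
  proof eventually_elim
    case (elim s)
    show ?case
    proof
      fix w assume "w \<in> (\<Union>p\<in>H. ball p \<delta>)"
      then obtain p where p: "p \<in> H" "dist p w < \<delta>" by auto
      have "p \<in> (\<Union>p\<in>F. ball p \<delta>)"
        using F(3) p(1) closure_subset by (meson subsetD)
      then obtain p' where p': "p' \<in> F" "dist p' p < \<delta>" by auto
      have "dist w p' < d" using p p' \<delta> dist_triangle[of w p' p] by (simp add: dist_commute)
      moreover have "w \<in> B" "p' \<in> B"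
        using R[of p] R[of p'] p p'(1) F(1) \<delta>(2) norm_triangle_ineq2[of w p]
        unfolding B_def by (auto simp: dist_norm norm_minus_commute)
      ultimately have "C * norm (J w - J p') < b / 4"
        using d(2)[of p' w] C(1) by (simp add: dist_norm field_simps)
      then have "log_norm_quotient (J w) s < - (b / 2)"
        using log_norm_quotient_le[OF elim(2), of "J w" "J p'"] C(2)[of "J w - J p'"] bspec[OF elim(1) p'(1)]
        by linarith
      then show "mat_norm N (mat 1 + s *\<^sub>R J w) \<le> 1 - b / 2 * s"
        using elim(2) unfolding log_norm_quotient_def by (simp add: field_simps)
    qed
  qed
  with \<delta>(1) show ?thesis by blast
qed

subsection \<open>Shadowing\<close>

lemma N_euler_step_diff_le:
  fixes h :: "real^'n \<Rightarrow> real^'n"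
  assumes diff: "\<forall>x. h differentiable (at x)"
    and bound: "\<And>w. w \<in> closed_segment q p \<Longrightarrow> mat_norm N (mat 1 + s *\<^sub>R Defs.jacobian h w) \<le> c"
  shows "N ((p + s *\<^sub>R h p) - (q + s *\<^sub>R h q)) \<le> c * N (p - q)"
proof (rule N_diff_le_if_mat_norm_bound[OF _ bound])
  fix w
  have "((\<lambda>v. v + s *\<^sub>R h v) has_derivative (\<lambda>v. v + s *\<^sub>R (Defs.jacobian h w *v v))) (at w)"
    using diff has_derivative_jacobian by (auto intro!: derivative_eq_intros)
  then show "((\<lambda>v. v + s *\<^sub>R h v) has_derivative (\<lambda>v. (mat 1 + s *\<^sub>R Defs.jacobian h w) *v v)) (at w)"
    by (simp add: matrix_vector_mult_add_rdistrib scaleR_matrix_vector_assoc[symmetric])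
qed

text \<open>Away from the shadowing bound the distance to an exact solution cannot grow: one Euler step
  contracts by \<open>1 - a s\<close>, while the defect of the pseudosolution costs at most \<open>s \<epsilon>\<close>.\<close>
lemma eventually_N_diff_nonincreasing:
  assumes x: "(x has_vector_derivative h (x r)) (at r within S)"
    and y: "(y has_vector_derivative dy) (at r within S)"
    and S: "\<forall>\<^sub>F u in at_right r. u \<in> S"
    and euler: "\<forall>\<^sub>F s in at_right 0.
      N ((x r + s *\<^sub>R h (x r)) - (y r + s *\<^sub>R h (y r))) \<le> (1 - a * s) * N (x r - y r)"
    and defect: "N (dy - h (y r)) \<le> \<epsilon>" and gap: "\<epsilon> < a * N (x r - y r)"
  shows "\<forall>\<^sub>F u in at_right r. N (x u - y u) \<le> N (x r - y r)"
proof -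
  define \<gamma> where "\<gamma> = a * N (x r - y r) - \<epsilon>"
  have "0 < \<gamma> / 2" using gap unfolding \<gamma>_def by simp
  with has_vector_derivative_diff[OF x y] S
  have "\<forall>\<^sub>F u in at_right r. N ((x u - y u) - (x r - y r) - (u - r) *\<^sub>R (h (x r) - dy)) \<le> \<gamma> / 2 * (u - r)"
    by (rule eventually_N_remainder_le)
  moreover have "\<forall>\<^sub>F u in at_right r.
      N ((x r + (u - r) *\<^sub>R h (x r)) - (y r + (u - r) *\<^sub>R h (y r))) \<le> (1 - a * (u - r)) * N (x r - y r)"
    using euler by (simp add: eventually_at_right_to_0[of _ r])
  ultimately show ?thesis
    using eventually_at_right_less[of r]
  proof eventually_elim
    case (elim u)
    define s where "s = u - r"
    let ?E = "(x r + s *\<^sub>R h (x r)) - (y r + s *\<^sub>R h (y r))"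
    let ?\<rho> = "(x u - y u) - (x r - y r) - s *\<^sub>R (h (x r) - dy)"
    have "x u - y u = ?E - s *\<^sub>R (dy - h (y r)) + ?\<rho>"
      by (simp add: algebra_simps)
    then have "N (x u - y u) = N ((?E - s *\<^sub>R (dy - h (y r))) + ?\<rho>)"
      by (rule arg_cong)
    also have "\<dots> \<le> N (?E - s *\<^sub>R (dy - h (y r))) + N ?\<rho>"
      by (rule N_triangle)
    also have "\<dots> \<le> N ?E + N (s *\<^sub>R (dy - h (y r))) + N ?\<rho>"
      using N_triangle_diff by simp
    also have "\<dots> \<le> (1 - a * s) * N (x r - y r) + s * \<epsilon> + \<gamma> / 2 * s"
      using elim defect unfolding s_def by (intro add_mono) (auto simp: N_scaleR mult_left_mono)
    also have "\<dots> = N (x r - y r) - s * \<gamma> / 2"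
      unfolding \<gamma>_def by (simp add: algebra_simps)
    moreover have "0 \<le> s * \<gamma> / 2" using \<open>0 < \<gamma> / 2\<close> elim(3) unfolding s_def by simp
    ultimately show ?case by linarith
  qed
qed

lemma N_diff_le_shadowing_bound:
  assumes "0 < a" "0 < \<epsilon>" "0 \<le> T"
    and near: "\<And>v. N v < 2 * \<epsilon> / a \<Longrightarrow> norm v < \<delta>"
    and U: "\<And>p. p \<in> H \<Longrightarrow> ball p \<delta> \<subseteq> U" and gh: "\<And>w. w \<in> U \<Longrightarrow> g w = h w"
    and euler: "\<forall>\<^sub>F s in at_right 0. \<forall>p q. closed_segment q p \<subseteq> U \<longrightarrow>
      N ((p + s *\<^sub>R h p) - (q + s *\<^sub>R h q)) \<le> (1 - a * s) * N (p - q)"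
    and x: "\<And>t. t \<in> {0..T} \<Longrightarrow> (x has_vector_derivative g (x t)) (at t within {0..T})"
    and y: "\<And>t. t \<in> {0..T} \<Longrightarrow> (y has_vector_derivative y' t) (at t within {0..T})"
    and defect: "\<And>t. t \<in> {0..T} \<Longrightarrow> N (y' t - h (y t)) \<le> \<epsilon>"
    and yH: "\<And>t. t \<in> {0..T} \<Longrightarrow> y t \<in> H" and "x 0 = y 0"
  shows "N (x T - y T) \<le> \<epsilon> / a"
proof (rule barrier_le[where f = "\<lambda>t. N (x t - y t)"])
  have "continuous_on {0..T} x" "continuous_on {0..T} y"
    unfolding continuous_on_eq_continuous_within
    using x y has_vector_derivative_continuous by blast+
  then show "continuous_on {0..T} (\<lambda>t. N (x t - y t))"
    by (intro continuous_on_compose2[OF continuous_on_N, of _ _ UNIV] continuous_intros) auto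
  show "N (x 0 - y 0) \<le> \<epsilon> / a" using \<open>x 0 = y 0\<close> \<open>0 < a\<close> \<open>0 < \<epsilon>\<close> by simp
  show "\<epsilon> / a < 2 * \<epsilon> / a" using \<open>0 < a\<close> \<open>0 < \<epsilon>\<close> by (simp add: divide_strict_right_mono)
  fix r assume r: "0 < r" "r < T" and above: "\<epsilon> / a < N (x r - y r)" "N (x r - y r) < 2 * \<epsilon> / a"
  then have "norm (x r - y r) < \<delta>" by (intro near)
  then have "closed_segment (y r) (x r) \<subseteq> ball (y r) \<delta>"
    by (intro closed_segment_subset) (auto simp: dist_norm norm_minus_commute intro: le_less_trans[OF norm_ge_zero])
  also have "\<dots> \<subseteq> U" using r by (intro U yH) auto
  finally have seg: "closed_segment (y r) (x r) \<subseteq> U" .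
  show "\<forall>\<^sub>F u in at_right r. N (x u - y u) \<le> N (x r - y r)"
  proof (rule eventually_N_diff_nonincreasing)
    show "(x has_vector_derivative h (x r)) (at r within {0..T})"
      using x[of r] gh[of "x r"] seg r by auto
    show "(y has_vector_derivative y' r) (at r within {0..T})" using y r by simp
    show "\<forall>\<^sub>F u in at_right r. u \<in> {0..T}"
      using r by (auto simp: eventually_at_right_field intro!: exI[of _ T])
    show "\<forall>\<^sub>F s in at_right 0.
      N ((x r + s *\<^sub>R h (x r)) - (y r + s *\<^sub>R h (y r))) \<le> (1 - a * s) * N (x r - y r)"
      using euler by eventually_elim (use seg in blast)
    show "N (y' r - h (y r)) \<le> \<epsilon>" using defect r by simp
    show "\<epsilon> < a * N (x r - y r)" using above \<open>0 < a\<close> by (simp add: field_simps)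
  qed
qed (use \<open>0 \<le> T\<close> in simp)

lemma shadowing_solution_exists:
  assumes "0 < a" "0 < \<epsilon>" "0 < \<tau>"
    and near: "\<And>v. N v < 2 * \<epsilon> / a \<Longrightarrow> norm v < \<delta>"
    and U: "\<And>p. p \<in> H \<Longrightarrow> ball p \<delta> \<subseteq> U"
    and lip: "L-lipschitz_on UNIV g" and gh: "\<And>w. w \<in> U \<Longrightarrow> g w = h w"
    and euler: "\<forall>\<^sub>F s in at_right 0. \<forall>p q. closed_segment q p \<subseteq> U \<longrightarrow>
      N ((p + s *\<^sub>R h p) - (q + s *\<^sub>R h q)) \<le> (1 - a * s) * N (p - q)"
    and y: "pseudosolution N h \<tau> y y'" and "sigma N h \<tau> y y' \<le> \<epsilon>"
    and yH: "\<forall>t\<in>dom_int \<tau>. y t \<in> H"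
  shows "\<exists>x. is_solution h \<tau> x \<and> (\<forall>t\<in>dom_int \<tau>. N (x t - y t) \<le> \<epsilon> / a)"
proof -
  let ?D = "dom_int \<tau>"
  obtain x where "x 0 = y 0" and x: "\<And>t. 0 \<le> t \<Longrightarrow> (x has_vector_derivative g (x t)) (at t within {0..})"
    using lipschitz_ode_solution_exists[OF lip] by blast
  have y': "(y has_vector_derivative y' s) (at s within ?D)" if "s \<in> ?D" for s
    using y that unfolding pseudosolution_def C1_on_with_def by blast
  have bound: "N (x t - y t) \<le> \<epsilon> / a" if t: "t \<in> ?D" for t
  proof (rule N_diff_le_shadowing_bound[OF \<open>0 < a\<close> \<open>0 < \<epsilon>\<close> _ near U gh euler])
    fix s assume "s \<in> {0..t}"
    then have s: "s \<in> ?D" "0 \<le> s" using Icc_subset_dom_int[OF t] by auto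
    show "(x has_vector_derivative g (x s)) (at s within {0..t})"
      by (rule has_vector_derivative_within_subset[OF x[OF s(2)]]) auto
    show "(y has_vector_derivative y' s) (at s within {0..t})"
      by (rule has_vector_derivative_within_subset[OF y'[OF s(1)] Icc_subset_dom_int[OF t]])
    show "N (y' s - h (y s)) \<le> \<epsilon>"
      using defect_le_sigma[OF y s(1)] \<open>sigma N h \<tau> y y' \<le> \<epsilon>\<close> by linarith
    show "y s \<in> H" using yH s(1) by blast
  next
    show "0 \<le> t" using t by (simp add: dom_int_def)
  qed (simp_all add: \<open>x 0 = y 0\<close>)
  have "is_solution h \<tau> x"
    unfolding is_solution_def
  proof
    fix t assume t: "t \<in> ?D"
    have "N (x t - y t) < 2 * \<epsilon> / a"
      using bound[OF t] \<open>0 < a\<close> \<open>0 < \<epsilon>\<close> by (simp add: field_simps)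
    then have "x t \<in> ball (y t) \<delta>"
      using near by (simp add: dist_norm norm_minus_commute)
    then have "x t \<in> U"
      using U yH t by blast
    moreover have "?D \<subseteq> {0..}" "0 \<le> t" using t by (auto simp: dom_int_def)
    ultimately show "(x has_vector_derivative h (x t)) (at t within ?D)"
      using has_vector_derivative_within_subset[OF x] gh by metis
  qed
  with bound show ?thesis by blast
qed

lemma cond_lipschitz_shadowingI:
  assumes "0 < a" "0 < \<delta>"
    and U: "\<And>p. p \<in> H \<Longrightarrow> ball p \<delta> \<subseteq> U"
    and lip: "L-lipschitz_on UNIV g" and gh: "\<And>w. w \<in> U \<Longrightarrow> g w = h w"
    and euler: "\<forall>\<^sub>F s in at_right 0. \<forall>p q. closed_segment q p \<subseteq> U \<longrightarrow>
      N ((p + s *\<^sub>R h p) - (q + s *\<^sub>R h q)) \<le> (1 - a * s) * N (p - q)"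
  shows "cond_lipschitz_shadowing N h H"
proof -
  obtain c where c: "c > 0" "\<And>v. norm v \<le> c * N v" using norm_le_N by blast
  define \<epsilon>0 where "\<epsilon>0 = a * \<delta> / (2 * c)"
  have shadow: "\<exists>x. is_solution h \<tau> x \<and> (SUP t\<in>dom_int \<tau>. N (x t - y t)) \<le> 1 / a * \<epsilon>
             \<and> bdd_above ((\<lambda>t. N (x t - y t)) ` dom_int \<tau>)"
    if "0 < \<epsilon>" "\<epsilon> \<le> \<epsilon>0" "0 < \<tau>" and y: "pseudosolution N h \<tau> y y'"
      "sigma N h \<tau> y y' \<le> \<epsilon>" "\<forall>t\<in>dom_int \<tau>. y t \<in> H" for \<epsilon> \<tau> y y'
  proof -
    have near: "norm v < \<delta>" if "N v < 2 * \<epsilon> / a" for v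
    proof -
      have "norm v \<le> c * N v" by (rule c(2))
      also have "\<dots> < c * (2 * \<epsilon> / a)" using that c(1) by (rule mult_strict_left_mono)
      also have "\<dots> \<le> \<delta>"
        using \<open>\<epsilon> \<le> \<epsilon>0\<close> \<open>0 < a\<close> c(1) unfolding \<epsilon>0_def by (simp add: field_simps)
      finally show ?thesis .
    qed
    obtain x where "is_solution h \<tau> x" and bound: "\<forall>t\<in>dom_int \<tau>. N (x t - y t) \<le> \<epsilon> / a"
      using shadowing_solution_exists[OF \<open>0 < a\<close> \<open>0 < \<epsilon>\<close> \<open>0 < \<tau>\<close> near U lip gh euler y]
      by blast
    moreover have "(SUP t\<in>dom_int \<tau>. N (x t - y t)) \<le> 1 / a * \<epsilon>"
      using bound zero_in_dom_int[OF \<open>0 < \<tau>\<close>] by (intro cSUP_least) auto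
    moreover have "bdd_above ((\<lambda>t. N (x t - y t)) ` dom_int \<tau>)"
      using bound by (intro bdd_aboveI2) auto
    ultimately show ?thesis by blast
  qed
  show ?thesis
    unfolding cond_lipschitz_shadowing_def
  proof (rule exI[of _ \<epsilon>0], intro conjI exI[of _ "1 / a"] allI impI)
    show "0 < \<epsilon>0"
      using \<open>0 < a\<close> \<open>0 < \<delta>\<close> c(1) unfolding \<epsilon>0_def by auto
    show "0 < 1 / a" using \<open>0 < a\<close> by simp
  qed (elim conjE, rule shadow; assumption)
qed

end

theorem mainTheorem10:
  fixes N :: "real^'n \<Rightarrow> real" and h :: "real^'n \<Rightarrow> real^'n" and H :: "(real^'n) set"
  assumes "is_norm N"
    and "H \<noteq> {}" and "bounded H"
    and "\<forall>x. h differentiable (at x)" and "continuous_on UNIV (jacobian h)"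
    and "bdd_above ((\<lambda>x. log_norm N (jacobian h x)) ` H)"
    and "(SUP x\<in>H. log_norm N (jacobian h x)) < 0"
  shows "cond_lipschitz_shadowing N h H"
proof -
  interpret cart_norm N by (rule cart_norm.intro) fact
  define b where "b = - (SUP x\<in>H. log_norm N (jacobian h x))"
  have "0 < b" using assms(7) unfolding b_def by simp
  have "log_norm N (jacobian h p) \<le> - b" if "p \<in> H" for p
    unfolding b_def using cSUP_upper[OF that assms(6)] by simp
  then obtain \<delta> where "0 < \<delta>" and step: "\<forall>\<^sub>F s in at_right 0.
      \<forall>w\<in>(\<Union>p\<in>H. ball p \<delta>). mat_norm N (mat 1 + s *\<^sub>R jacobian h w) \<le> 1 - b / 2 * s"
    using eventually_mat_norm_le_near[OF assms(3,5) _ \<open>0 < b\<close>] by blast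
  have euler: "\<forall>\<^sub>F s in at_right 0. \<forall>p q. closed_segment q p \<subseteq> (\<Union>p\<in>H. ball p \<delta>) \<longrightarrow>
      N ((p + s *\<^sub>R h p) - (q + s *\<^sub>R h q)) \<le> (1 - b / 2 * s) * N (p - q)"
    using step by eventually_elim (blast intro: N_euler_step_diff_le[OF assms(4)])
  obtain g L where "L-lipschitz_on UNIV g" "\<forall>w\<in>(\<Union>p\<in>H. ball p \<delta>). g w = h w"
    using C1_lipschitz_extension[OF assms(4,5) bounded_Union_balls[OF assms(3)]] by blast
  with \<open>0 < b\<close> \<open>0 < \<delta>\<close> euler show ?thesis
    by (intro cond_lipschitz_shadowingI[of "b / 2" \<delta> H "\<Union>p\<in>H. ball p \<delta>" L g h]) auto
qed

end
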